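(* Let $\mathsf{X}=\mathbb{R}^d$ with a probability measure $\mu$, let $(\mathsf{Y},\nu)$ be a Polish probability space, let $c:\mathsf{X}\times\mathsf{Y}\to[0,\infty)$ be continuous and differentiable in $x$ with $\nabla_x c$ continuous, let $\pi_\varepsilon$ be the $(c,\varepsilon)$-cyclically invariant coupling for each $\varepsilon>0$ (assumed to exist), and assume $\pi_\varepsilon\to\pi_*$ weakly as $\varepsilon\to0$ for some $\pi_*\in\Pi(\mu,\nu)$; let $\Gamma:=\operatorname{spt}\pi_*$ and $\mathsf{X}_0:=\operatorname{proj}_{\mathsf{X}}\Gamma$. Let $x\in\operatorname{Int}\mathsf{X}_0$ and $y\in\mathsf{Y}$. Let $\pi_*$ be given by a transport map $T:\mathsf{X}_0\to\mathsf{Y}$ (i.e., $\Gamma=\{(x',T(x')):x'\in\mathsf{X}_0\}$) which is continuous at $x$. If $\nabla_x c(x,y)-\nabla_x c(x,T(x))\neq0$, then $I(x,y)>0$.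
   Context: $\Pi(\mu,\nu)$ is the set of couplings of $\mu,\nu$ and $P:=\mu\otimes\nu$. A coupling $\pi$ is $(c,\varepsilon)$-cyclically invariant if $\pi\sim P$ and its density admits a version $\frac{d\pi}{dP}:\mathsf{X}\times\mathsf{Y}\to(0,\infty)$ with $\prod_{i=1}^k\frac{d\pi}{dP}(x_i,y_i)=\exp\big(-\frac1\varepsilon[\sum_{i=1}^k c(x_i,y_i)-\sum_{i=1}^k c(x_i,y_{i+1})]\big)\prod_{i=1}^k\frac{d\pi}{dP}(x_i,y_{i+1})$ for all $k$ and points, $y_{k+1}:=y_1$. The function $I$ is $I(x,y):=\sup_{k\ge2}\sup_{(x_i,y_i)_{i=2}^k\subset\Gamma}\sup_{\sigma\in\Sigma(k)}\sum_{i=1}^k c(x_i,y_i)-\sum_{i=1}^k c(x_i,y_{\sigma(i)})$ with $(x_1,y_1):=(x,y)$ and $\Sigma(k)$ the permutations of $\{1,\dots,k\}$. *)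

theory Defs
  imports "HOL-Probability.Probability"
begin

definition couplings :: "'a::topological_space measure \<Rightarrow> 'b::topological_space measure \<Rightarrow> ('a \<times> 'b) measure set" where
  "couplings \<mu> \<nu> = {\<pi>. prob_space \<pi> \<and> sets \<pi> = sets (borel :: ('a \<times> 'b) measure)
      \<and> distr \<pi> \<mu> fst = \<mu> \<and> distr \<pi> \<nu> snd = \<nu>}"

definition cyclically_invariant ::
  "('a::topological_space \<Rightarrow> 'b::topological_space \<Rightarrow> real) \<Rightarrow> real \<Rightarrow> 'a measure \<Rightarrow> 'b measure \<Rightarrow> ('a \<times> 'b) measure \<Rightarrow> bool" where
  "cyclically_invariant c \<epsilon> \<mu> \<nu> \<pi> \<longleftrightarrow> \<pi> \<in> couplings \<mu> \<nu> \<and>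
     (\<exists>f :: 'a \<times> 'b \<Rightarrow> real. f \<in> borel_measurable (\<mu> \<Otimes>\<^sub>M \<nu>) \<and> (\<forall>z. f z > 0)
        \<and> \<pi> = density (\<mu> \<Otimes>\<^sub>M \<nu>) (\<lambda>z. ennreal (f z))
        \<and> (\<forall>(k::nat) (xs :: nat \<Rightarrow> 'a) (ys :: nat \<Rightarrow> 'b). k \<ge> 1 \<longrightarrow>
             (\<Prod>i<k. f (xs i, ys i)) =
             exp (- (1 / \<epsilon>) * ((\<Sum>i<k. c (xs i) (ys i)) - (\<Sum>i<k. c (xs i) (ys (Suc i mod k)))))
             * (\<Prod>i<k. f (xs i, ys (Suc i mod k)))))"

definition spt :: "'a::topological_space measure \<Rightarrow> 'a set" where
  "spt M = {z. \<forall>U. open U \<longrightarrow> z \<in> U \<longrightarrow> emeasure M U > 0}"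

definition weak_conv_at0 :: "(real \<Rightarrow> 'a::topological_space measure) \<Rightarrow> 'a measure \<Rightarrow> bool" where
  "weak_conv_at0 \<pi> \<pi>' \<longleftrightarrow> (\<forall>g :: 'a \<Rightarrow> real. continuous_on UNIV g \<and> bounded (range g) \<longrightarrow>
      ((\<lambda>\<epsilon>. \<integral>z. g z \<partial>\<pi> \<epsilon>) \<longlongrightarrow> (\<integral>z. g z \<partial>\<pi>')) (at_right 0))"

definition cycI :: "('a \<Rightarrow> 'b \<Rightarrow> real) \<Rightarrow> ('a \<times> 'b) set \<Rightarrow> 'a \<Rightarrow> 'b \<Rightarrow> ereal" where
  "cycI c \<Gamma> x y = (SUP (k, xs, ys, \<sigma>) \<in> {(k::nat, xs :: nat \<Rightarrow> 'a, ys :: nat \<Rightarrow> 'b, \<sigma>). k \<ge> 2 \<and> xs 0 = x \<and> ys 0 = y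
        \<and> (\<forall>i\<in>{1..<k}. (xs i, ys i) \<in> \<Gamma>) \<and> (\<sigma> :: nat \<Rightarrow> nat) permutes {0..<k}}.
      ereal ((\<Sum>i<k. c (xs i) (ys i)) - (\<Sum>i<k. c (xs i) (ys (\<sigma> i)))))"

end

theory Submission
  imports Defs
begin

text \<open>Let \<open>w = \<nabla>\<^sub>x c(x,y) - \<nabla>\<^sub>x c(x,T x)\<close> and move from \<open>x\<close> against it,
  \<open>x' = x - t w\<close>. For small \<open>t > 0\<close> the point \<open>x'\<close> lies in \<open>X\<^sub>0\<close>, so \<open>(x', T x') \<in> \<Gamma>\<close>,
  and the two-cycle that swaps \<open>y\<close> and \<open>T x'\<close> has gain
  \<open>c(x,y) + c(x',T x') - c(x,T x') - c(x',y)\<close>. By the mean value theorem this gain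
  is \<open>t |w|\<^sup>2\<close> up to an error \<open>t |w| \<cdot> sup |\<nabla>\<^sub>x c(\<xi>,T x') - \<nabla>\<^sub>x c(\<xi>,y) + w|\<close> over \<open>\<xi> \<in> [x,x']\<close>,
  and continuity of \<open>\<nabla>\<^sub>x c\<close> and of \<open>T\<close> at \<open>x\<close> makes that supremum smaller than
  \<open>|w|/2\<close>.\<close>

lemma cycI_ge_swap:
  assumes "(x', y') \<in> \<Gamma>"
  shows "ereal (c x y + c x' y' - c x y' - c x' y) \<le> cycI c \<Gamma> x y"
proof -
  define xs where "xs = (\<lambda>i::nat. if i = 0 then x else x')"
  define ys where "ys = (\<lambda>i::nat. if i = 0 then y else y')"
  define \<sigma> where "\<sigma> = Transposition.transpose (0::nat) 1"
  have "\<sigma> permutes {0..<2}"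
    unfolding \<sigma>_def by (rule permutes_swap_id) auto
  moreover have "{1..<2::nat} = {1}" by auto
  ultimately have "(2, xs, ys, \<sigma>) \<in> {(k, xs, ys, \<sigma>). k \<ge> 2 \<and> xs 0 = x \<and> ys 0 = y
        \<and> (\<forall>i\<in>{1..<k}. (xs i, ys i) \<in> \<Gamma>) \<and> \<sigma> permutes {0..<k}}"
    using assms by (simp add: xs_def ys_def)
  moreover have "(\<Sum>i<2. c (xs i) (ys i)) - (\<Sum>i<2. c (xs i) (ys (\<sigma> i)))
      = c x y + c x' y' - c x y' - c x' y"
    by (simp add: xs_def ys_def \<sigma>_def numeral_2_eq_2 lessThan_Suc)
  ultimately show ?thesis
    unfolding cycI_def by (intro SUP_upper2) auto
qed

lemma inner_linearization_bound:
  fixes g :: "'a::real_inner \<Rightarrow> real"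
  assumes deriv: "\<And>\<xi>. \<xi> \<in> closed_segment a b \<Longrightarrow> (g has_derivative (\<lambda>h. G \<xi> \<bullet> h)) (at \<xi>)"
    and close: "\<And>\<xi>. \<xi> \<in> closed_segment a b \<Longrightarrow> norm (G \<xi> - v) \<le> B"
  shows "\<bar>g b - g a - v \<bullet> (b - a)\<bar> \<le> B * norm (b - a)"
proof -
  have "norm ((g b - v \<bullet> b) - (g a - v \<bullet> a)) \<le> B * norm (b - a)"
  proof (rule differentiable_bound[where f' = "\<lambda>\<xi> h. (G \<xi> - v) \<bullet> h"])
    fix \<xi> assume \<xi>: "\<xi> \<in> closed_segment a b"
    have "((\<lambda>\<xi>. g \<xi> - v \<bullet> \<xi>) has_derivative (\<lambda>h. G \<xi> \<bullet> h - v \<bullet> h)) (at \<xi>)"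
      by (intro derivative_intros deriv \<xi>)
    then show "((\<lambda>\<xi>. g \<xi> - v \<bullet> \<xi>) has_derivative (\<lambda>h. (G \<xi> - v) \<bullet> h))
        (at \<xi> within closed_segment a b)"
      by (simp add: inner_diff_left has_derivative_at_withinI)
    show "onorm (\<lambda>h. (G \<xi> - v) \<bullet> h) \<le> B"
    proof (rule onorm_bound)
      show "0 \<le> B"
        using close[OF \<xi>] norm_ge_zero order_trans by blast
      fix h
      show "norm ((G \<xi> - v) \<bullet> h) \<le> B * norm h"
        using Cauchy_Schwarz_ineq2[of "G \<xi> - v" h] close[OF \<xi>]
        by (simp add: mult_right_mono order_trans)
    qed
  qed auto
  then show ?thesis
    by (simp add: inner_diff_right algebra_simps)
qed

lemma isCont_uncurry_eps_delta:
  assumes "isCont (\<lambda>p. F (fst p) (snd p)) (a, b)" "e > 0"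
  obtains \<delta> where "\<delta> > 0"
    "\<And>\<xi> \<zeta>. dist \<xi> a < \<delta> \<Longrightarrow> dist \<zeta> b < \<delta> \<Longrightarrow> dist (F \<xi> \<zeta>) (F a b) < e"
proof -
  obtain \<delta> where "\<delta> > 0" and \<delta>: "\<And>p. dist p (a, b) < \<delta> \<Longrightarrow> dist (F (fst p) (snd p)) (F a b) < e"
    using assms unfolding continuous_at_eps_delta by fastforce
  have "dist (F \<xi> \<zeta>) (F a b) < e" if "dist \<xi> a < \<delta>/2" "dist \<zeta> b < \<delta>/2" for \<xi> \<zeta>
  proof -
    have "dist (\<xi>, \<zeta>) (a, b) \<le> dist \<xi> a + dist \<zeta> b"
      unfolding dist_Pair_Pair by (rule sqrt_sum_squares_le_sum) auto
    with that show ?thesis using \<delta>[of "(\<xi>, \<zeta>)"] by simp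
  qed
  with \<open>\<delta> > 0\<close> show thesis by (intro that[of "\<delta>/2"]) auto
qed

lemma small_step_from_interior_point:
  fixes x u :: "'a::real_normed_vector"
  assumes "continuous (at x within X) T" "x \<in> interior X" "\<delta> > 0"
  obtains t where "t > 0" "x - t *\<^sub>R u \<in> X" "dist (x - t *\<^sub>R u) x < \<delta>"
    "dist (T (x - t *\<^sub>R u)) (T x) < \<delta>"
proof -
  let ?x = "\<lambda>t::real. x - t *\<^sub>R u"
  have lim: "(?x \<longlongrightarrow> x) (at_right 0)"
    by (intro tendsto_eq_intros) auto
  have in_X: "eventually (\<lambda>t. ?x t \<in> X) (at_right 0)"
    using topological_tendstoD[OF lim open_interior \<open>x \<in> interior X\<close>]
    by (auto elim: eventually_mono dest: interior_subset[THEN subsetD])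
  have "((\<lambda>t. T (?x t)) \<longlongrightarrow> T x) (at_right 0)"
    using continuous_within_tendsto_compose[OF assms(1) in_X lim] .
  then have "eventually (\<lambda>t. t > 0 \<and> ?x t \<in> X \<and> dist (?x t) x < \<delta> \<and> dist (T (?x t)) (T x) < \<delta>)
      (at_right 0)"
    using in_X tendstoD[OF lim \<open>\<delta> > 0\<close>] tendstoD[OF _ \<open>\<delta> > 0\<close>]
    by (auto simp: eventually_at_right_less eventually_conj_iff)
  then show thesis
    using that eventually_happens'[OF trivial_limit_at_right_real] by blast
qed

lemma swap_gain_lower_bound:
  fixes c :: "'a::real_inner \<Rightarrow> 'b \<Rightarrow> real"
  assumes c_grad: "\<And>x y. ((\<lambda>x'. c x' y) has_derivative (\<lambda>h. Dc x y \<bullet> h)) (at x)"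
    and near: "\<And>\<xi>. \<xi> \<in> closed_segment x (x - t *\<^sub>R w) \<Longrightarrow>
      norm (Dc \<xi> y' - Dc \<xi> y + w) \<le> norm w / 2"
    and "t \<ge> 0"
  defines "x' \<equiv> x - t *\<^sub>R w"
  shows "c x y + c x' y' - c x y' - c x' y \<ge> t * (norm w)\<^sup>2 / 2"
proof -
  have linearization:
    "\<bar>(c x' y' - c x' y) - (c x y' - c x y) - (- w) \<bullet> (x' - x)\<bar> \<le> norm w / 2 * norm (x' - x)"
    using near unfolding x'_def
    by (intro inner_linearization_bound[where G = "\<lambda>\<xi>. Dc \<xi> y' - Dc \<xi> y"])
      (auto simp: inner_diff_left intro!: derivative_eq_intros c_grad)
  have inner_step: "(- w) \<bullet> (x' - x) = t * (norm w)\<^sup>2"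
    by (simp add: x'_def power2_norm_eq_inner)
  have norm_step: "norm w / 2 * norm (x' - x) = t * (norm w)\<^sup>2 / 2"
    using \<open>t \<ge> 0\<close> by (simp add: x'_def power2_eq_square)
  from linearization
  have "\<bar>(c x' y' - c x' y) - (c x y' - c x y) - t * (norm w)\<^sup>2\<bar> \<le> t * (norm w)\<^sup>2 / 2"
    unfolding inner_step norm_step .
  then show ?thesis
    by (simp only: abs_le_iff) linarith
qed

lemma cycI_pos_of_gradient_gap:
  fixes c :: "'a::real_inner \<Rightarrow> 'b::metric_space \<Rightarrow> real" and Dc :: "'a \<Rightarrow> 'b \<Rightarrow> 'a"
  assumes c_grad: "\<And>x y. ((\<lambda>x'. c x' y) has_derivative (\<lambda>h. Dc x y \<bullet> h)) (at x)"
    and Dc_cont: "isCont (\<lambda>p. Dc (fst p) (snd p)) (x, T x)" "isCont (\<lambda>p. Dc (fst p) (snd p)) (x, y)"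
    and graph: "\<And>x'. x' \<in> X \<Longrightarrow> (x', T x') \<in> \<Gamma>"
    and T_cont: "continuous (at x within X) T"
    and x_int: "x \<in> interior X"
    and gap: "Dc x y \<noteq> Dc x (T x)"
  shows "cycI c \<Gamma> x y > 0"
proof -
  define w where "w = Dc x y - Dc x (T x)"
  have "norm w > 0"
    using gap by (simp add: w_def)
  have "isCont (\<lambda>p. Dc (fst p) y) (x, T x)"
    using isCont_o2[where f = "\<lambda>p. (fst p, y)" and a = "(x, T x)" and g = "\<lambda>p. Dc (fst p) (snd p)"]
      Dc_cont(2)
    by (simp add: continuous_intros)
  then have "isCont (\<lambda>p. Dc (fst p) (snd p) - Dc (fst p) y) (x, T x)"
    by (intro continuous_intros Dc_cont(1))
  then obtain \<delta> where "\<delta> > 0" and Dc_near: "\<And>\<xi> \<zeta>. dist \<xi> x < \<delta> \<Longrightarrow> dist \<zeta> (T x) < \<delta> \<Longrightarrow>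
      dist (Dc \<xi> \<zeta> - Dc \<xi> y) (Dc x (T x) - Dc x y) < norm w / 2"
    by (rule isCont_uncurry_eps_delta[where e = "norm w / 2"]) (use \<open>norm w > 0\<close> in auto)
  obtain t where "t > 0" and step: "x - t *\<^sub>R w \<in> X" "dist (x - t *\<^sub>R w) x < \<delta>"
    "dist (T (x - t *\<^sub>R w)) (T x) < \<delta>"
    using small_step_from_interior_point[OF T_cont x_int \<open>\<delta> > 0\<close>] by blast
  define x' where "x' = x - t *\<^sub>R w"
  have "norm (Dc \<xi> (T x') - Dc \<xi> y + w) \<le> norm w / 2" if "\<xi> \<in> closed_segment x x'" for \<xi>
  proof -
    have "dist \<xi> x < \<delta>"
      using segment_bound1[OF that] step(2) by (simp add: x'_def dist_norm)
    with step(3) have "dist (Dc \<xi> (T x') - Dc \<xi> y) (Dc x (T x) - Dc x y) < norm w / 2"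
      by (intro Dc_near) (simp_all add: x'_def)
    then show ?thesis
      by (simp add: w_def dist_norm algebra_simps)
  qed
  then have "c x y + c x' (T x') - c x (T x') - c x' y \<ge> t * (norm w)\<^sup>2 / 2"
    using \<open>t > 0\<close> unfolding x'_def by (intro swap_gain_lower_bound[OF c_grad]) auto
  moreover have "0 < t * (norm w)\<^sup>2 / 2"
    using \<open>t > 0\<close> \<open>norm w > 0\<close> by simp
  moreover have "ereal (c x y + c x' (T x') - c x (T x') - c x' y) \<le> cycI c \<Gamma> x y"
    using graph step(1) by (intro cycI_ge_swap) (simp add: x'_def)
  ultimately show ?thesis
    by (metis ereal_less(2) less_le_trans order_less_le_trans)
qed

theorem lemma5p2:
  fixes \<mu> :: "'a::euclidean_space measure" and \<nu> :: "'b::polish_space measure"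
    and c :: "'a \<Rightarrow> 'b \<Rightarrow> real" and Dc :: "'a \<Rightarrow> 'b \<Rightarrow> 'a"
    and \<pi> :: "real \<Rightarrow> ('a \<times> 'b) measure" and \<pi>s :: "('a \<times> 'b) measure"
    and T :: "'a \<Rightarrow> 'b" and x :: 'a and y :: 'b
  assumes mu: "prob_space \<mu>" "sets \<mu> = sets borel"
    and nu: "prob_space \<nu>" "sets \<nu> = sets borel"
    and c_nonneg: "\<And>x y. c x y \<ge> 0"
    and c_cont: "continuous_on UNIV (\<lambda>(x, y). c x y)"
    and c_grad: "\<And>x y. ((\<lambda>x'. c x' y) has_derivative (\<lambda>h. Dc x y \<bullet> h)) (at x)"
    and Dc_cont: "continuous_on UNIV (\<lambda>(x, y). Dc x y)"
    and pi_eps: "\<And>\<epsilon>. \<epsilon> > 0 \<Longrightarrow> cyclically_invariant c \<epsilon> \<mu> \<nu> (\<pi> \<epsilon>)"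
    and pis: "\<pi>s \<in> couplings \<mu> \<nu>"
    and conv: "weak_conv_at0 \<pi> \<pi>s"
    and T_map: "spt \<pi>s = {(x', T x') | x'. x' \<in> fst ` spt \<pi>s}"
    and T_cont: "continuous (at x within fst ` spt \<pi>s) T"
    and x_int: "x \<in> interior (fst ` spt \<pi>s)"
    and grad_ne: "Dc x y - Dc x (T x) \<noteq> 0"
  shows "cycI c (spt \<pi>s) x y > 0"
proof (rule cycI_pos_of_gradient_gap[OF c_grad _ _ _ T_cont x_int])
  have "isCont (\<lambda>p. Dc (fst p) (snd p)) p" for p
    using Dc_cont by (cases p) (simp add: continuous_on_eq_continuous_at case_prod_unfold)
  then show "isCont (\<lambda>p. Dc (fst p) (snd p)) (x, T x)" "isCont (\<lambda>p. Dc (fst p) (snd p)) (x, y)"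
    by blast+
  show "(x', T x') \<in> spt \<pi>s" if "x' \<in> fst ` spt \<pi>s" for x'
    using T_map that by blast
  show "Dc x y \<noteq> Dc x (T x)"
    using grad_ne by simp
qed

end
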